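(* Let $L\in\mathbb{R}^{n\times n}$ be the Laplacian matrix of an undirected weighted graph, with eigenvalues $\lambda_1(L)\le\cdots\le\lambda_n(L)$ and orthonormal eigenvectors $v_1(L),\dots,v_n(L)$, and let $V_k=[v_1(L)\ \cdots\ v_k(L)]$, $\Lambda_k=\mathrm{diag}\{\lambda_i(L)\}_{i=1}^k$. Suppose $L$ is $k$-block-ideal with respect to a $k$-way partition $\{\mathcal{I}_1,\dots,\mathcal{I}_k\}$ of $[n]$, with invertible matrix $S\in\mathbb{R}^{k\times k}$ satisfying $V_k=P_{\{\mathcal{I}_i\}_{i=1}^k}S$, where $$P_{\{\mathcal{I}_i\}_{i=1}^k}:=[\mathbf{1}_{\mathcal{I}_1}\ \mathbf{1}_{\mathcal{I}_2}\ \cdots\ \mathbf{1}_{\mathcal{I}_k}].$$ Let $g_1(s),\dots,g_n(s)$, $f(s)$ be scalar transfer functions, $G(s)=\mathrm{diag}\{g_i(s)\}_{i=1}^n$ and $T_k(s)=V_k(V_k^TG^{-1}(s)V_k+f(s)\Lambda_k)^{-1}V_k^T$. Then $$T_k(s)=P_{\{\mathcal{I}_i\}_{i=1}^k}\big(I_k+\hat{G}(s)L_kf(s)\big)^{-1}\hat{G}(s)P^T_{\{\mathcal{I}_i\}_{i=1}^k},$$ where $\hat{G}(s)=\mathrm{diag}\{\hat{g}_i(s)\}_{i=1}^k$, $\hat{g}_i(s)=\big(\sum_{j\in\mathcal{I}_i}g_j^{-1}(s)\big)^{-1}$, and $L_k=(S^{-1})^T\Lambda_kS^{-1}$.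
   Context: For $\mathcal{I}\subseteq[n]=\{1,\dots,n\}$, $\mathbf{1}_{\mathcal{I}}\in\mathbb{R}^n$ is the indicator vector with $[\mathbf{1}_\mathcal{I}]_i=1$ if $i\in\mathcal{I}$ and $0$ otherwise. A Laplacian $L$ is called $k$-block-ideal with respect to a $k$-way partition $\{\mathcal{I}_1,\dots,\mathcal{I}_k\}$ of $[n]$ if there exists an invertible $S\in\mathbb{R}^{k\times k}$ with $[v_1(L)\ \cdots\ v_k(L)]=[\mathbf{1}_{\mathcal{I}_1}\ \cdots\ \mathbf{1}_{\mathcal{I}_k}]S$. *)

theory Defs
  imports "Jordan_Normal_Form.Gauss_Jordan_Elimination"
begin

definition minv :: "'a :: field mat \<Rightarrow> 'a mat" where
  "minv A = the (mat_inverse A)"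

definition weighted_graph_laplacian :: "nat \<Rightarrow> real mat \<Rightarrow> bool" where
  "weighted_graph_laplacian n L \<longleftrightarrow>
     (\<exists>W :: nat \<Rightarrow> nat \<Rightarrow> real.
        (\<forall>i<n. \<forall>j<n. W i j = W j i \<and> W i j \<ge> 0) \<and> (\<forall>i<n. W i i = 0) \<and>
        L = Matrix.mat n n (\<lambda>(i,j). if i = j then (\<Sum>l<n. W i l) else - W i j))"

definition is_partition :: "nat \<Rightarrow> nat \<Rightarrow> (nat \<Rightarrow> nat set) \<Rightarrow> bool" where
  "is_partition n k I \<longleftrightarrow>
     (\<forall>i<k. I i \<noteq> {}) \<and> (\<forall>i<k. \<forall>j<k. i \<noteq> j \<longrightarrow> I i \<inter> I j = {}) \<and>
     (\<Union>i<k. I i) = {0..<n}"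

definition indicator_mat :: "nat \<Rightarrow> nat \<Rightarrow> (nat \<Rightarrow> nat set) \<Rightarrow> 'a :: zero_neq_one mat" where
  "indicator_mat n k I = Matrix.mat n k (\<lambda>(r,c). if r \<in> I c then 1 else 0)"

text \<open>V_k = [v_1 ... v_k] (0-based: columns v 0, ..., v (k-1)).\<close>
definition first_cols :: "nat \<Rightarrow> nat \<Rightarrow> (nat \<Rightarrow> 'a vec) \<Rightarrow> 'a mat" where
  "first_cols n k v = Matrix.mat n k (\<lambda>(r,c). v c $ r)"

end

theory Submission
  imports Defs "Jordan_Normal_Form.Determinant"
begin

(* Block-ideality V_k = P S turns the k x k matrix to be inverted into a congruence:
   V_k^T G^-1 V_k = S^T (P^T G^-1 P) S, where P^T G^-1 P = diag (sum_{j in I_i} 1/g_j) = Ghat^-1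
   because the indicator columns have disjoint supports, and Lambda_k = S^T L_k S by the
   definition of L_k. Hence V_k^T G^-1 V_k + f Lambda_k = S^T Ghat^-1 (I + Ghat f L_k) S, and in
   V_k (...)^-1 V_k^T = P S (...)^-1 S^T P^T the factors S cancel. *)

lemma mult_mat_assoc_dim:
  "dim_col A = dim_row B \<Longrightarrow> dim_col B = dim_row C \<Longrightarrow> A * B * C = A * (B * C)"
  by (rule assoc_mult_mat[of _ "dim_row A" "dim_col A" _ "dim_col B" _ "dim_col C"]) auto

lemma invertible_mat_det_nonzero:
  fixes A :: "'a::comm_ring_1 mat"
  assumes "invertible_mat A"
  shows "det A \<noteq> 0"
proof -
  obtain B where AB: "A * B = 1\<^sub>m (dim_row A)" and BA: "B * A = 1\<^sub>m (dim_row B)"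
    and square: "dim_col A = dim_row A"
    using assms unfolding invertible_mat_def inverts_mat_def by auto
  have A: "A \<in> carrier_mat (dim_row A) (dim_row A)"
    using square by auto
  have B: "B \<in> carrier_mat (dim_row A) (dim_row A)"
    using arg_cong[OF AB, of dim_col] arg_cong[OF BA, of dim_col] square by auto
  have "det A * det B = 1"
    using det_mult[OF A B] AB by simp
  then show ?thesis by auto
qed

lemma minv_inverse:
  fixes A :: "'a::field mat"
  assumes A: "A \<in> carrier_mat n n" and dA: "det A \<noteq> 0"
  shows "minv A \<in> carrier_mat n n" "A * minv A = 1\<^sub>m n" "minv A * A = 1\<^sub>m n"
proof -
  have "A \<in> Units (ring_mat TYPE('a) n ())"
    by (rule det_non_zero_imp_unit[OF A dA])
  then obtain B where "mat_inverse A = Some B"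
    using mat_inverse(1)[OF A] by fastforce
  then show "minv A \<in> carrier_mat n n" "A * minv A = 1\<^sub>m n" "minv A * A = 1\<^sub>m n"
    using mat_inverse(2)[OF A] unfolding minv_def by auto
qed

lemma minv_eqI:
  fixes A :: "'a::field mat"
  assumes A: "A \<in> carrier_mat n n" and B: "B \<in> carrier_mat n n" and AB: "A * B = 1\<^sub>m n"
  shows "minv A = B"
proof -
  have "det A * det B = 1"
    using det_mult[OF A B] AB by simp
  then have "det A \<noteq> 0" by auto
  note inv = minv_inverse[OF A this]
  have "B = (minv A * A) * B"
    using inv B by simp
  also have "\<dots> = minv A * (A * B)"
    by (rule assoc_mult_mat[OF inv(1) A B])
  also have "\<dots> = minv A"
    using AB inv(1) by simp
  finally show ?thesis by simp
qed

lemma minv_mult: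
  fixes A :: "'a::field mat"
  assumes A: "A \<in> carrier_mat n n" and B: "B \<in> carrier_mat n n"
    and "det A \<noteq> 0" "det B \<noteq> 0"
  shows "minv (A * B) = minv B * minv A"
proof -
  note invA = minv_inverse[OF A \<open>det A \<noteq> 0\<close>] and invB = minv_inverse[OF B \<open>det B \<noteq> 0\<close>]
  have "A * B * (minv B * minv A) = A * ((B * minv B) * minv A)"
    using A B invA(1) invB(1) by (simp add: assoc_mult_mat[of _ n n _ n _ n])
  also have "\<dots> = 1\<^sub>m n"
    using A invA invB by simp
  finally show ?thesis
    by (rule minv_eqI[OF mult_carrier_mat[OF A B] mult_carrier_mat[OF invB(1) invA(1)]])
qed

lemma minv_mat_diag:
  fixes d :: "nat \<Rightarrow> 'a::field"
  assumes "\<And>i. i < n \<Longrightarrow> d i \<noteq> 0"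
  shows "minv (mat_diag n d) = mat_diag n (\<lambda>i. inverse (d i))"
proof (rule minv_eqI[of _ n])
  show "mat_diag n d * mat_diag n (\<lambda>i. inverse (d i)) = 1\<^sub>m n"
    unfolding mat_diag_diag by (rule eq_matI) (auto simp: mat_diag_def assms)
qed auto

lemma minv_congruence:
  fixes S :: "'a::field mat"
  assumes S: "S \<in> carrier_mat k k" and X: "X \<in> carrier_mat k k"
    and dS: "det S \<noteq> 0" and dX: "det X \<noteq> 0"
  shows "S * minv (S\<^sup>T * X * S) * S\<^sup>T = minv X"
proof -
  have ST: "S\<^sup>T \<in> carrier_mat k k" using S by simp
  have dST: "det (S\<^sup>T) \<noteq> 0" using dS det_transpose[OF S] by simp
  have dSTX: "det (S\<^sup>T * X) \<noteq> 0" using det_mult[OF ST X] dST dX by simp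
  note invS = minv_inverse[OF S dS] and invST = minv_inverse[OF ST dST]
    and invX = minv_inverse[OF X dX]
  have "minv (S\<^sup>T * X * S) = minv S * minv (S\<^sup>T * X)"
    by (rule minv_mult[OF mult_carrier_mat[OF ST X] S dSTX dS])
  also have "minv (S\<^sup>T * X) = minv X * minv (S\<^sup>T)"
    by (rule minv_mult[OF ST X dST dX])
  finally have "S * minv (S\<^sup>T * X * S) * S\<^sup>T = (S * minv S) * (minv X * (minv (S\<^sup>T) * S\<^sup>T))"
    using S ST invS(1) invST(1) invX(1) by (simp add: assoc_mult_mat[of _ k k _ k _ k])
  also have "\<dots> = minv X"
    using invS invST invX by simp
  finally show ?thesis .
qed

lemma congruence_minv_cancel:
  fixes S :: "'a::field mat"
  assumes S: "S \<in> carrier_mat k k" and "det S \<noteq> 0" and D: "D \<in> carrier_mat k k"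
  shows "S\<^sup>T * ((minv S)\<^sup>T * D * minv S) * S = D"
proof -
  note inv = minv_inverse[OF S \<open>det S \<noteq> 0\<close>]
  have "S\<^sup>T * ((minv S)\<^sup>T * D * minv S) * S = (minv S * S)\<^sup>T * D * (minv S * S)"
    unfolding transpose_mult[OF inv(1) S]
    using carrier_matD[OF S] carrier_matD[OF D] carrier_matD[OF inv(1)]
    by (simp add: mult_mat_assoc_dim)
  then show ?thesis
    using inv(3) D by simp
qed

lemma indicator_mat_gram_diag:
  fixes w :: "nat \<Rightarrow> 'a::comm_ring_1"
  assumes part: "is_partition n k I"
  shows "(indicator_mat n k I)\<^sup>T * mat_diag n w * indicator_mat n k I
       = mat_diag k (\<lambda>i. \<Sum>j\<in>I i. w j)"
proof (rule eq_matI)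
  fix i j assume "i < dim_row (mat_diag k (\<lambda>i. \<Sum>j\<in>I i. w j))"
    and "j < dim_col (mat_diag k (\<lambda>i. \<Sum>j\<in>I i. w j))"
  then have i: "i < k" and j: "j < k" by (auto simp: mat_diag_def)
  have P: "(indicator_mat n k I :: 'a mat) \<in> carrier_mat n k"
    unfolding indicator_mat_def by simp
  have "((indicator_mat n k I)\<^sup>T * mat_diag n w * indicator_mat n k I) $$ (i, j)
      = (\<Sum>r<n. if r \<in> I i \<inter> I j then w r else 0)"
    using P i j unfolding mat_diag_mult_right[OF transpose_carrier_mat[THEN iffD2, OF P]]
    by (auto simp: scalar_prod_def indicator_mat_def lessThan_atLeast0 intro!: sum.cong)
  also have "\<dots> = (if i = j then \<Sum>r\<in>I i. w r else 0)"
  proof -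
    have "I i \<subseteq> {..<n}" and "i \<noteq> j \<Longrightarrow> I i \<inter> I j = {}"
      using part i j unfolding is_partition_def by auto
    then show ?thesis
      by (auto simp: sum.inter_restrict[symmetric] Int_absorb1 disjoint_iff intro!: sum.neutral)
  qed
  finally show "((indicator_mat n k I)\<^sup>T * mat_diag n w * indicator_mat n k I) $$ (i, j)
      = mat_diag k (\<lambda>i. \<Sum>j\<in>I i. w j) $$ (i, j)"
    using i j by (simp add: mat_diag_def)
qed (auto simp: indicator_mat_def mat_diag_def)

lemma (in semiring_hom) mat_hom_congruence:
  assumes S: "S \<in> carrier_mat k k" and X: "X \<in> carrier_mat k k"
  shows "mat\<^sub>h (S\<^sup>T * X * S) = (mat\<^sub>h S)\<^sup>T * mat\<^sub>h X * mat\<^sub>h S"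
proof -
  have ST: "S\<^sup>T \<in> carrier_mat k k" using S by simp
  show ?thesis
    using mat_hom_mult[OF mult_carrier_mat[OF ST X] S] mat_hom_mult[OF ST X]
    by (simp add: map_mat_transpose)
qed

lemma map_mat_of_real_indicator_mat:
  "map_mat of_real (indicator_mat n k I) = (indicator_mat n k I :: 'a::real_algebra_1 mat)"
  unfolding indicator_mat_def by (rule eq_matI) auto

lemma block_ideal_congruence:
  fixes P :: "'a::field mat"
  assumes P: "P \<in> carrier_mat n k" and S: "S \<in> carrier_mat k k"
    and Ginv: "Ginv \<in> carrier_mat n n" and Ghat: "Ghat \<in> carrier_mat k k"
    and Lk: "Lk \<in> carrier_mat k k"
    and Ghat_inverse: "P\<^sup>T * Ginv * P * Ghat = 1\<^sub>m k"
    and Lk_congruent: "S\<^sup>T * Lk * S = Lam"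
  shows "(P * S)\<^sup>T * Ginv * (P * S) + c \<cdot>\<^sub>m Lam
       = S\<^sup>T * (P\<^sup>T * Ginv * P * (1\<^sub>m k + Ghat * (c \<cdot>\<^sub>m Lk))) * S"
proof -
  define H where "H = P\<^sup>T * Ginv * P"
  have H: "H \<in> carrier_mat k k" and ST: "S\<^sup>T \<in> carrier_mat k k" and cLk: "c \<cdot>\<^sub>m Lk \<in> carrier_mat k k"
    using P Ginv S Lk unfolding H_def by auto
  have "H * (1\<^sub>m k + Ghat * (c \<cdot>\<^sub>m Lk)) = H * 1\<^sub>m k + (H * Ghat) * (c \<cdot>\<^sub>m Lk)"
    using mult_add_distrib_mat[OF H _ mult_carrier_mat[OF Ghat cLk]] H Ghat cLk by simp
  also have "\<dots> = H + c \<cdot>\<^sub>m Lk"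
    using Ghat_inverse[folded H_def] H Lk by simp
  finally have HN: "H * (1\<^sub>m k + Ghat * (c \<cdot>\<^sub>m Lk)) = H + c \<cdot>\<^sub>m Lk" .
  have Ginv_part: "(P * S)\<^sup>T * Ginv * (P * S) = S\<^sup>T * H * S"
    unfolding H_def transpose_mult[OF P S]
    using carrier_matD[OF P] carrier_matD[OF S] carrier_matD[OF Ginv]
    by (simp add: mult_mat_assoc_dim)
  have Lam_part: "S\<^sup>T * (c \<cdot>\<^sub>m Lk) * S = c \<cdot>\<^sub>m Lam"
    unfolding Lk_congruent[symmetric] mult_smult_distrib[OF ST Lk]
    by (rule mult_smult_assoc_mat[OF mult_carrier_mat[OF ST Lk] S])
  have "S\<^sup>T * (H + c \<cdot>\<^sub>m Lk) * S = S\<^sup>T * H * S + S\<^sup>T * (c \<cdot>\<^sub>m Lk) * S"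
    unfolding mult_add_distrib_mat[OF ST H cLk]
    by (rule add_mult_distrib_mat[OF mult_carrier_mat[OF ST H] mult_carrier_mat[OF ST cLk] S])
  then show ?thesis
    unfolding H_def[symmetric] HN Ginv_part Lam_part ..
qed

lemma block_ideal_transfer_matrix:
  fixes P :: "'a::field mat"
  assumes P: "P \<in> carrier_mat n k" and S: "S \<in> carrier_mat k k"
    and Ginv: "Ginv \<in> carrier_mat n n" and Ghat: "Ghat \<in> carrier_mat k k"
    and Lk: "Lk \<in> carrier_mat k k"
    and Ghat_inverse: "P\<^sup>T * Ginv * P * Ghat = 1\<^sub>m k"
    and Lk_congruent: "S\<^sup>T * Lk * S = Lam"
    and det_M: "det ((P * S)\<^sup>T * Ginv * (P * S) + c \<cdot>\<^sub>m Lam) \<noteq> 0"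
  shows "P * S * minv ((P * S)\<^sup>T * Ginv * (P * S) + c \<cdot>\<^sub>m Lam) * (P * S)\<^sup>T
       = P * minv (1\<^sub>m k + Ghat * (c \<cdot>\<^sub>m Lk)) * Ghat * P\<^sup>T"
proof -
  define H where "H = P\<^sup>T * Ginv * P"
  define N where "N = 1\<^sub>m k + Ghat * (c \<cdot>\<^sub>m Lk)"
  define M where "M = (P * S)\<^sup>T * Ginv * (P * S) + c \<cdot>\<^sub>m Lam"
  have H: "H \<in> carrier_mat k k" and N: "N \<in> carrier_mat k k" and ST: "S\<^sup>T \<in> carrier_mat k k"
    using P Ginv Ghat Lk S unfolding H_def N_def by auto
  have M_eq: "M = S\<^sup>T * (H * N) * S"
    unfolding M_def H_def N_def
    by (rule block_ideal_congruence[OF P S Ginv Ghat Lk Ghat_inverse Lk_congruent])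
  have M: "M \<in> carrier_mat k k"
    unfolding M_eq using ST H N S by (blast intro: mult_carrier_mat)
  have "det M = det S * (det H * det N) * det S"
    unfolding M_eq using ST H N S by (simp add: det_mult[of _ k] det_transpose)
  then have dM: "det M \<noteq> 0" and dS: "det S \<noteq> 0" and dH: "det H \<noteq> 0" and dN: "det N \<noteq> 0"
    using det_M unfolding M_def by auto
  have "S * minv M * S\<^sup>T = minv (H * N)"
    unfolding M_eq using dH dN det_mult[OF H N]
    by (intro minv_congruence[OF S mult_carrier_mat[OF H N] dS]) auto
  also have "\<dots> = minv N * minv H"
    by (rule minv_mult[OF H N dH dN])
  also have "minv H = Ghat"
    by (rule minv_eqI[OF H Ghat Ghat_inverse[folded H_def]])
  finally have sandwich: "S * minv M * S\<^sup>T = minv N * Ghat" .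
  note dims = carrier_matD[OF minv_inverse(1)[OF M dM]] carrier_matD[OF minv_inverse(1)[OF N dN]]
    carrier_matD[OF P] carrier_matD[OF S] carrier_matD[OF Ghat]
  have "P * S * minv M * (P * S)\<^sup>T = P * (S * minv M * S\<^sup>T) * P\<^sup>T"
    unfolding transpose_mult[OF P S] using dims by (simp add: mult_mat_assoc_dim)
  also have "\<dots> = P * minv N * Ghat * P\<^sup>T"
    unfolding sandwich using dims by (simp add: mult_mat_assoc_dim)
  finally show ?thesis
    unfolding M_def N_def .
qed

theorem theorem3:
  fixes n k :: nat
    and L :: "real mat"
    and lam :: "nat \<Rightarrow> real"
    and v :: "nat \<Rightarrow> real vec"
    and I :: "nat \<Rightarrow> nat set"
    and S :: "real mat"
    and g :: "nat \<Rightarrow> complex \<Rightarrow> complex"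
    and f :: "complex \<Rightarrow> complex"
    and s :: complex
  assumes L_lap: "L \<in> carrier_mat n n" "weighted_graph_laplacian n L"
    and k_le: "1 \<le> k" "k \<le> n"
    and eig_vec: "\<And>i. i < n \<Longrightarrow> v i \<in> carrier_vec n \<and> L *\<^sub>v v i = lam i \<cdot>\<^sub>v v i"
    and orthonormal: "\<And>i j. i < n \<Longrightarrow> j < n \<Longrightarrow> v i \<bullet> v j = (if i = j then 1 else 0)"
    and sorted: "\<And>i j. i \<le> j \<Longrightarrow> j < n \<Longrightarrow> lam i \<le> lam j"
    and part: "is_partition n k I"
    and S_inv: "S \<in> carrier_mat k k" "invertible_mat S"
    and block_ideal: "first_cols n k v = indicator_mat n k I * S"
    and g_nz: "\<And>j. j < n \<Longrightarrow> g j s \<noteq> 0"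
    and ghat_def: "\<And>i. i < k \<Longrightarrow> (\<Sum>j\<in>I i. inverse (g j s)) \<noteq> 0"
    and T_def: "invertible_mat
        ((map_mat complex_of_real (first_cols n k v))\<^sup>T
           * minv (mat_diag n (\<lambda>j. g j s))
           * map_mat complex_of_real (first_cols n k v)
         + f s \<cdot>\<^sub>m map_mat complex_of_real (mat_diag k lam))"
  shows
    "map_mat complex_of_real (first_cols n k v)
       * minv ((map_mat complex_of_real (first_cols n k v))\<^sup>T
                 * minv (mat_diag n (\<lambda>j. g j s))
                 * map_mat complex_of_real (first_cols n k v)
               + f s \<cdot>\<^sub>m map_mat complex_of_real (mat_diag k lam))
       * (map_mat complex_of_real (first_cols n k v))\<^sup>T
     = indicator_mat n k I
       * minv (1\<^sub>m k + mat_diag k (\<lambda>i. inverse (\<Sum>j\<in>I i. inverse (g j s)))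
                 * (f s \<cdot>\<^sub>m map_mat complex_of_real ((minv S)\<^sup>T * mat_diag k lam * minv S)))
       * mat_diag k (\<lambda>i. inverse (\<Sum>j\<in>I i. inverse (g j s)))
       * (indicator_mat n k I)\<^sup>T"
proof -
  let ?c = "map_mat complex_of_real"
  define P :: "complex mat" where "P = indicator_mat n k I"
  define Lk where "Lk = (minv S)\<^sup>T * mat_diag k lam * minv S"
  have P: "P \<in> carrier_mat n k"
    unfolding P_def indicator_mat_def by simp
  have S: "S \<in> carrier_mat k k" and dS: "det S \<noteq> 0"
    using S_inv invertible_mat_det_nonzero by blast+
  have Lk: "Lk \<in> carrier_mat k k"
    unfolding Lk_def carrier_mat_def using carrier_matD[OF minv_inverse(1)[OF S dS]] by simp
  have "?c (first_cols n k v) = ?c (indicator_mat n k I) * ?c S"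
    unfolding block_ideal using S
    by (intro of_real_hom.mat_hom_mult[of _ n]) (auto simp: indicator_mat_def)
  then have V: "?c (first_cols n k v) = P * ?c S"
    unfolding map_mat_of_real_indicator_mat P_def .
  have Ginv: "minv (mat_diag n (\<lambda>j. g j s)) = mat_diag n (\<lambda>j. inverse (g j s))"
    using g_nz by (rule minv_mat_diag)
  have Ghat_inverse: "P\<^sup>T * minv (mat_diag n (\<lambda>j. g j s)) * P
      * mat_diag k (\<lambda>i. inverse (\<Sum>j\<in>I i. inverse (g j s))) = 1\<^sub>m k"
    unfolding Ginv P_def indicator_mat_gram_diag[OF part] mat_diag_diag
    by (rule eq_matI) (auto simp: mat_diag_def ghat_def)
  have "S\<^sup>T * Lk * S = mat_diag k lam"
    unfolding Lk_def by (rule congruence_minv_cancel[OF S dS]) simp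
  then have Lk_congruent: "(?c S)\<^sup>T * ?c Lk * ?c S = ?c (mat_diag k lam)"
    using of_real_hom.mat_hom_congruence[OF S Lk] by metis
  have det_M: "det ((P * ?c S)\<^sup>T * minv (mat_diag n (\<lambda>j. g j s)) * (P * ?c S)
      + f s \<cdot>\<^sub>m ?c (mat_diag k lam)) \<noteq> 0"
    using invertible_mat_det_nonzero[OF T_def] unfolding V .
  show ?thesis
    unfolding V Lk_def[symmetric] P_def[symmetric]
    by (rule block_ideal_transfer_matrix[OF P _ _ _ _ Ghat_inverse Lk_congruent det_M])
      (use S Lk Ginv in auto)
qed

end
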